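(* The map $R$ has infinite topological entropy: $h(R)=\infty$.
   Context: Define $\rho$ on binary words: for $b=b_1b_2\dots$, $\rho(b)$ is obtained by deleting every digit $b_n=0$ and replacing every $b_n=1$ by $0$ if $n$ is odd and by $1$ if $n$ is even. For $x\in(0,1]$ let $\beta(x)$ be the unique binary expansion of $x$ with infinitely many $1$'s. Define $R:[0,1]\to[0,1]$ by $R(0)=2/3$ and, for $x\in(0,1]$, $R(x)=\sum_{n\ge1}c_n2^{-n}$ where $c=\rho(\beta(x))$. The topological entropy (Bowen–Dinaburg definition, used here for a not necessarily continuous map) is $h(R)=\lim_{\varepsilon\to0}\limsup_{n\to\infty}\frac1n\log r(n,\varepsilon)$, where $r(n,\varepsilon)$ is the maximal cardinality of a subset of $[0,1]$ whose distinct points are at distance $\ge\varepsilon$ in the metric $d_n(x,y)=\max_{0\le i\le n}|R^i(x)-R^i(y)|$. *)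

theory Defs
  imports "HOL-Analysis.Analysis" "HOL-Library.Infinite_Set" "HOL-Library.Liminf_Limsup"
begin

text \<open>Binary words b = b_1 b_2 ... are modelled as nat => bool, with index 0 unused (False).\<close>

definition beta :: "real \<Rightarrow> (nat \<Rightarrow> bool)" where
  "beta x = (THE b. \<not> b 0 \<and> infinite {n. b n} \<and>
                     (\<lambda>n. (if b n then 1 else 0) / (2::real) ^ n) sums x)"

definition rho :: "(nat \<Rightarrow> bool) \<Rightarrow> (nat \<Rightarrow> bool)" where
  "rho b = (\<lambda>k. if k = 0 then False
                 else even (enumerate {n. 1 \<le> n \<and> b n} (k - 1)))"

definition R :: "real \<Rightarrow> real" where
  "R x = (if x = 0 then 2/3
          else (\<Sum>k. (if rho (beta x) k then 1 else 0) / (2::real) ^ k))"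

text \<open>Bowen--Dinaburg entropy of a (not necessarily continuous) map T on [0,1].\<close>
definition dn :: "(real \<Rightarrow> real) \<Rightarrow> nat \<Rightarrow> real \<Rightarrow> real \<Rightarrow> real" where
  "dn T n x y = Max ((\<lambda>i. \<bar>(T ^^ i) x - (T ^^ i) y\<bar>) ` {0..n})"

definition separated :: "(real \<Rightarrow> real) \<Rightarrow> nat \<Rightarrow> real \<Rightarrow> real set \<Rightarrow> bool" where
  "separated T n \<epsilon> S \<longleftrightarrow> S \<subseteq> {0..1} \<and> (\<forall>x\<in>S. \<forall>y\<in>S. x \<noteq> y \<longrightarrow> \<epsilon> \<le> dn T n x y)"

definition r_sep :: "(real \<Rightarrow> real) \<Rightarrow> nat \<Rightarrow> real \<Rightarrow> ereal" where
  "r_sep T n \<epsilon> = Sup {ereal (real (card S)) | S. finite S \<and> separated T n \<epsilon> S}"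

definition log_growth :: "(real \<Rightarrow> real) \<Rightarrow> real \<Rightarrow> nat \<Rightarrow> ereal" where
  "log_growth T \<epsilon> n = (if r_sep T n \<epsilon> = \<infinity> then \<infinity>
                        else ereal (ln (real_of_ereal (r_sep T n \<epsilon>)) / real n))"

definition top_entropy :: "(real \<Rightarrow> real) \<Rightarrow> ereal" where
  "top_entropy T = Lim (at_right (0::real)) (\<lambda>\<epsilon>. limsup (log_growth T \<epsilon>))"

end

theory Submission
  imports Defs
begin

text \<open>
  On binary expansions, R behaves like a shift over an unbounded alphabet. Since rho only sees the
  parities of the positions of the ones, for odd s every word c with c 0 = c 1 = 0 and infinitely
  many ones has a rho-preimage whose first one sits at position s; for s \<ge> 2 that preimage again
  has c 0 = c 1 = 0. Iterating, every list a_0, ..., a_n of symbols below m is realised by a point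
  whose i-th iterate has its first binary one at position 2 a_i + 3, which pins that iterate
  between 2^-(2 a_i + 3) and 2^-(2 a_i + 2). Distinct lists therefore give points at d_n-distance
  at least 2^-(2m+2), so r(n, eps) \<ge> m^(n+1) for small eps and h(R) \<ge> ln m for every m.
\<close>

definition bin_val :: "(nat \<Rightarrow> bool) \<Rightarrow> real" where
  "bin_val b = (\<Sum>n. (if b n then 1 else 0) / (2::real) ^ n)"

lemma summable_bin_digits: "summable (\<lambda>n. (if b n then 1 else 0) / (2::real) ^ n)"
proof (rule summable_comparison_test[where g="\<lambda>n. (1/2::real) ^ n"])
  show "summable (\<lambda>n. (1/2::real) ^ n)" by (rule summable_geometric) simp
qed (auto simp: power_one_over)

lemma summable_bin_digits_shift:
  "summable (\<lambda>n. (if b (n+k) then 1 else 0) / (2::real) ^ (n+k))"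
  using summable_bin_digits[of b] by (subst summable_iff_shift)

lemma bin_val_split:
  "bin_val b = (\<Sum>n. (if b (n+k) then 1 else 0) / (2::real) ^ (n+k))
             + (\<Sum>n<k. (if b n then 1 else 0) / (2::real) ^ n)"
  unfolding bin_val_def by (rule suminf_split_initial_segment[OF summable_bin_digits])

lemma bin_tail_le: "(\<Sum>n. (if b (n+k) then 1 else 0) / (2::real) ^ (n+k)) \<le> 2 / 2 ^ k"
proof -
  have geom: "(\<lambda>n. (1/2::real) ^ n / 2 ^ k) sums (2 / 2 ^ k)"
    using sums_divide[OF geometric_sums[of "1/2::real"], of "2 ^ k"] by simp
  have "(\<Sum>n. (if b (n+k) then 1 else 0) / (2::real) ^ (n+k)) \<le> (\<Sum>n. (1/2::real) ^ n / 2 ^ k)"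
  proof (rule suminf_le)
    fix n
    have "(1::real) / 2 ^ (n+k) = (1/2) ^ n / 2 ^ k" by (simp add: power_add power_one_over)
    then show "(if b (n+k) then 1 else 0) / (2::real) ^ (n+k) \<le> (1/2::real) ^ n / 2 ^ k"
      by (cases "b (n+k)") auto
  qed (use summable_bin_digits_shift sums_summable[OF geom] in auto)
  also have "\<dots> = 2 / 2 ^ k" using sums_unique[OF geom] by simp
  finally show ?thesis .
qed

lemma bin_val_le_if_zeros_below: "(\<And>n. n < s \<Longrightarrow> \<not> b n) \<Longrightarrow> bin_val b \<le> 2 / 2 ^ s"
  using bin_val_split[of b s] bin_tail_le[of b s] by simp

lemma bin_val_ge_digit: "b s \<Longrightarrow> 1 / 2 ^ s \<le> bin_val b"
  using sum_le_suminf[OF summable_bin_digits, of "{s}" b] unfolding bin_val_def by simp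

lemma bin_val_nonneg: "0 \<le> bin_val b"
  unfolding bin_val_def by (rule suminf_nonneg[OF summable_bin_digits]) auto

lemma bin_val_less:
  assumes "\<forall>n<m. b n = b' n" "b m" "\<not> b' m" "infinite {n. b n}"
  shows "bin_val b' < bin_val b"
proof -
  obtain j where j: "b j" "j > m"
    using assms(4) unfolding infinite_nat_iff_unbounded by auto
  have same_prefix: "(\<Sum>n<m. (if b n then 1 else 0) / (2::real) ^ n)
                   = (\<Sum>n<m. (if b' n then 1 else 0) / (2::real) ^ n)"
    using assms(1) by (intro sum.cong) auto
  have "0 < (\<Sum>n. (if b (n + Suc m) then 1 else 0) / (2::real) ^ (n + Suc m))"
    using j by (intro suminf_pos2[OF summable_bin_digits_shift, of _ _ "j - Suc m"]) auto
  moreover have "(\<Sum>n. (if b' (n + Suc m) then 1 else 0) / (2::real) ^ (n + Suc m)) \<le> 2 / 2 ^ Suc m"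
    by (rule bin_tail_le)
  ultimately show ?thesis
    using bin_val_split[of b "Suc m"] bin_val_split[of b' "Suc m"] same_prefix assms(2,3) by simp
qed

lemma bin_val_inj:
  assumes "infinite {n. b n}" "infinite {n. b' n}" "bin_val b = bin_val b'"
  shows "b = b'"
proof (rule ccontr)
  assume "b \<noteq> b'"
  then have ex: "\<exists>n. b n \<noteq> b' n" by auto
  define m where "m = (LEAST n. b n \<noteq> b' n)"
  have "b m \<noteq> b' m" unfolding m_def using ex by (rule LeastI_ex)
  moreover have "\<forall>n<m. b n = b' n" unfolding m_def using not_less_Least by blast
  ultimately show False
    using bin_val_less[of m b b'] bin_val_less[of m b' b] assms by (cases "b m") auto
qed

lemma beta_bin_val:
  assumes "\<not> b 0" "infinite {n. b n}"
  shows "beta (bin_val b) = b"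
  unfolding beta_def
proof (rule the_equality)
  show "\<not> b 0 \<and> infinite {n. b n} \<and> (\<lambda>n. (if b n then 1 else 0) / (2::real) ^ n) sums bin_val b"
    using assms summable_bin_digits unfolding bin_val_def by (auto intro: summable_sums)
next
  fix b' assume "\<not> b' 0 \<and> infinite {n. b' n} \<and> (\<lambda>n. (if b' n then 1 else 0) / (2::real) ^ n) sums bin_val b"
  then show "b' = b"
    using bin_val_inj[of b' b] assms sums_unique unfolding bin_val_def[of b'] by metis
qed

lemma R_bin_val:
  assumes "\<not> b 0" "infinite {n. b n}"
  shows "R (bin_val b) = bin_val (rho b)"
proof -
  obtain s where "b s" using assms(2) not_finite_existsD by auto
  then have "bin_val b \<noteq> 0" using bin_val_ge_digit[of b s]
    by (metis divide_pos_pos not_le zero_less_numeral zero_less_one zero_less_power)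
  then show ?thesis unfolding R_def using beta_bin_val[OF assms] by (simp add: bin_val_def)
qed

lemma enumerate_range_strict_mono:
  fixes e :: "nat \<Rightarrow> nat"
  assumes "strict_mono e"
  shows "enumerate (range e) k = e k"
proof (induction k)
  case 0
  have "\<And>j. e 0 \<le> e j" using assms by (simp add: strict_mono_less_eq)
  then show ?case by (auto simp: enumerate_0 intro!: Least_equality)
next
  case (Suc k)
  have "infinite (range e)" using assms strict_mono_imp_inj_on range_inj_infinite by blast
  moreover have "(LEAST s. s \<in> range e \<and> e k < s) = e (Suc k)"
  proof (rule Least_equality)
    show "e (Suc k) \<in> range e \<and> e k < e (Suc k)" using assms by (auto simp: strict_mono_def)
  next
    fix y assume "y \<in> range e \<and> e k < y"
    with assms show "e (Suc k) \<le> y" by (auto simp: strict_mono_less strict_mono_less_eq)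
  qed
  ultimately show ?case using enumerate_Suc''[of "range e" k] Suc by simp
qed

text \<open>
  For odd s, the (k+1)-st one of lift_word s c lies at an even position exactly when c (k+1)
  holds, so rho recovers c.
\<close>

definition lift_pos :: "nat \<Rightarrow> (nat \<Rightarrow> bool) \<Rightarrow> nat \<Rightarrow> nat" where
  "lift_pos s c k = (if k = 0 then s else s + 2*k - (if c (Suc k) then 1 else 0))"

definition lift_word :: "nat \<Rightarrow> (nat \<Rightarrow> bool) \<Rightarrow> nat \<Rightarrow> bool" where
  "lift_word s c n \<longleftrightarrow> n \<in> range (lift_pos s c)"

lemma strict_mono_lift_pos: "strict_mono (lift_pos s c)"
  by (rule strict_monoI_Suc) (auto simp: lift_pos_def)

lemma lift_pos_ge: "s \<le> lift_pos s c k"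
  by (auto simp: lift_pos_def)

lemma infinite_lift_word: "infinite {n. lift_word s c n}"
  using strict_mono_lift_pos[of s c] strict_mono_imp_inj_on range_inj_infinite
  unfolding lift_word_def by auto

lemma lift_word_below: "n < s \<Longrightarrow> \<not> lift_word s c n"
  using lift_pos_ge[of s c] unfolding lift_word_def by (auto simp: not_le[symmetric])

lemma lift_word_start: "lift_word s c s"
  unfolding lift_word_def by (rule range_eqI[of _ _ 0]) (simp add: lift_pos_def)

lemma rho_lift_word:
  assumes "odd s" "\<not> c 0" "\<not> c 1"
  shows "rho (lift_word s c) = c"
proof
  fix k
  have "s \<ge> 1" using assms(1) by (cases s) auto
  then have ones: "{n. 1 \<le> n \<and> lift_word s c n} = range (lift_pos s c)"
    using lift_pos_ge[of s c] unfolding lift_word_def by (auto intro: order_trans)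
  show "rho (lift_word s c) k = c k"
  proof (cases "k \<le> 1")
    case True
    then show ?thesis
      using assms unfolding rho_def ones enumerate_range_strict_mono[OF strict_mono_lift_pos]
      by (cases k) (auto simp: lift_pos_def)
  next
    case False
    then obtain j where "k = Suc j" "j \<ge> 1" by (cases k) auto
    then show ?thesis
      using assms(1) unfolding rho_def ones enumerate_range_strict_mono[OF strict_mono_lift_pos]
      by (cases "c k") (auto simp: lift_pos_def)
  qed
qed

definition admissible :: "(nat \<Rightarrow> bool) \<Rightarrow> bool" where
  "admissible c \<longleftrightarrow> \<not> c 0 \<and> \<not> c 1 \<and> infinite {n. c n}"

lemma R_lift_word:
  assumes "odd s" "admissible c"
  shows "R (bin_val (lift_word s c)) = bin_val c"
proof -
  have "\<not> lift_word s c 0" using assms(1) lift_word_below[of 0 s] by (cases s) auto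
  then show ?thesis
    using R_bin_val infinite_lift_word rho_lift_word assms unfolding admissible_def by metis
qed

lemma admissible_lift_word: "s \<ge> 2 \<Longrightarrow> admissible (lift_word s c)"
  unfolding admissible_def using lift_word_below infinite_lift_word by auto

lemma lift_word_dist_ge:
  assumes "a < m" "a' < m" "a \<noteq> a'"
  shows "1 / 2 ^ (2*m+2) \<le> \<bar>bin_val (lift_word (2*a+3) c) - bin_val (lift_word (2*a'+3) c')\<bar>"
proof -
  have gap: "1 / 2 ^ (2*m+2) \<le> bin_val (lift_word (2*a+3) c) - bin_val (lift_word (2*a'+3) c')"
    if "a < a'" "a < m" for a a' c c'
  proof -
    have "1 / 2 ^ (2*a+3) \<le> bin_val (lift_word (2*a+3) c)"
      by (rule bin_val_ge_digit) (rule lift_word_start)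
    moreover have "bin_val (lift_word (2*a'+3) c') \<le> 2 / 2 ^ (2*a'+3)"
      by (rule bin_val_le_if_zeros_below) (rule lift_word_below)
    moreover have "(2::real) / 2 ^ (2*a'+3) \<le> 2 / 2 ^ (2*a+5)"
      using that by (intro divide_left_mono power_increasing) auto
    moreover have "(1::real) / 2 ^ (2*m+2) \<le> 1 / 2 ^ (2*a+4)"
      using that by (intro divide_left_mono power_increasing) auto
    ultimately show ?thesis by (simp add: power_add)
  qed
  show ?thesis
    using gap[of a a' c c'] gap[of a' a c' c] assms by (cases "a < a'") auto
qed

fun tower_word :: "nat list \<Rightarrow> nat \<Rightarrow> bool" where
  "tower_word [] = (\<lambda>k. 2 \<le> k)"
| "tower_word (a # as) = lift_word (2*a+3) (tower_word as)"

lemma admissible_tower_word: "admissible (tower_word xs)"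
proof (cases xs)
  case Nil
  have "infinite {k::nat. 2 \<le> k}" by (simp add: infinite_Ici atLeast_def[symmetric])
  then show ?thesis using Nil by (simp add: admissible_def)
qed (simp add: admissible_lift_word)

lemma funpow_R_tower_word:
  "i \<le> length xs \<Longrightarrow> (R ^^ i) (bin_val (tower_word xs)) = bin_val (tower_word (drop i xs))"
proof (induction xs arbitrary: i)
  case (Cons a as)
  show ?case
  proof (cases i)
    case (Suc j)
    have "R (bin_val (tower_word (a # as))) = bin_val (tower_word as)"
      using R_lift_word admissible_tower_word by simp
    then show ?thesis using Cons Suc by (simp only: funpow_Suc_right comp_apply) simp
  qed simp
qed simp

lemma dn_ge: "i \<le> n \<Longrightarrow> \<bar>(T ^^ i) x - (T ^^ i) y\<bar> \<le> dn T n x y"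
  unfolding dn_def by (rule Max_ge) auto

lemma dn_same: "dn T n x x = 0"
  unfolding dn_def by (simp add: image_constant_conv)

lemma card_le_r_sep: "finite S \<Longrightarrow> separated T n \<epsilon> S \<Longrightarrow> ereal (real (card S)) \<le> r_sep T n \<epsilon>"
  unfolding r_sep_def by (rule Sup_upper) blast

lemma log_growth_ge:
  assumes "0 < c" "n \<ge> 1" "ereal (c ^ n) \<le> r_sep T n \<epsilon>"
  shows "ereal (ln c) \<le> log_growth T \<epsilon> n"
proof (cases "r_sep T n \<epsilon> = \<infinity>")
  case False
  with assms(3) obtain r where r: "r_sep T n \<epsilon> = ereal r" "c ^ n \<le> r"
    by (cases "r_sep T n \<epsilon>") auto
  have "real n * ln c = ln (c ^ n)" using assms(1) by (simp add: ln_realpow)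
  also have "\<dots> \<le> ln r"
    using r(2) assms(1) by (subst ln_le_cancel_iff) (auto intro: less_le_trans[OF zero_less_power])
  finally show ?thesis using assms(2) r(1) by (simp add: log_growth_def field_simps)
qed (simp add: log_growth_def)

lemma top_entropy_eq_PInfty:
  assumes "\<And>m::nat. m \<ge> 1 \<Longrightarrow> \<exists>\<delta>>0. \<forall>\<epsilon> n. 0 < \<epsilon> \<longrightarrow> \<epsilon> < \<delta> \<longrightarrow> n \<ge> 1 \<longrightarrow>
                                      ereal (real m ^ n) \<le> r_sep T n \<epsilon>"
  shows "top_entropy T = \<infinity>"
proof -
  have "((\<lambda>\<epsilon>. limsup (log_growth T \<epsilon>)) \<longlongrightarrow> \<infinity>) (at_right (0::real))"
  proof (subst tendsto_PInfty, intro allI)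
    fix r :: real
    define m where "m = nat \<lceil>exp r\<rceil> + 1"
    have "m \<ge> 1" unfolding m_def by simp
    have "exp r < real m" unfolding m_def by linarith
    then have "ln (exp r) < ln (real m)" using \<open>m \<ge> 1\<close> by (subst ln_less_cancel_iff) auto
    then have "r < ln (real m)" by simp
    obtain \<delta> where "\<delta> > 0" and \<delta>:
      "\<And>\<epsilon> n. 0 < \<epsilon> \<Longrightarrow> \<epsilon> < \<delta> \<Longrightarrow> n \<ge> 1 \<Longrightarrow> ereal (real m ^ n) \<le> r_sep T n \<epsilon>"
      using assms[OF \<open>m \<ge> 1\<close>] by blast
    have "ereal r < limsup (log_growth T \<epsilon>)" if "0 < \<epsilon>" "\<epsilon> < \<delta>" for \<epsilon>
    proof -
      have "\<forall>\<^sub>F n in sequentially. ereal (ln (real m)) \<le> log_growth T \<epsilon> n"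
        using eventually_ge_at_top[of 1]
        by eventually_elim (use log_growth_ge \<delta> that \<open>m \<ge> 1\<close> in auto)
      then have "ereal (ln (real m)) \<le> limsup (log_growth T \<epsilon>)"
        by (intro le_Limsup) simp_all
      moreover have "ereal r < ereal (ln (real m))" using \<open>r < ln (real m)\<close> by simp
      ultimately show ?thesis by (meson less_le_trans)
    qed
    with \<open>\<delta> > 0\<close> show "\<forall>\<^sub>F \<epsilon> in at_right 0. ereal r < limsup (log_growth T \<epsilon>)"
      unfolding eventually_at_right_field by blast
  qed
  then show ?thesis unfolding top_entropy_def by (intro tendsto_Lim) auto
qed

definition code_lists :: "nat \<Rightarrow> nat \<Rightarrow> nat list set" where
  "code_lists m n = {xs. set xs \<subseteq> {..<m} \<and> length xs = Suc n}"

lemma finite_code_lists: "finite (code_lists m n)"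
  unfolding code_lists_def by (rule finite_lists_length_eq) simp

lemma dn_R_tower_words_ge:
  assumes "xs \<in> code_lists m n" "ys \<in> code_lists m n" "xs \<noteq> ys"
  shows "1 / 2 ^ (2*m+2) \<le> dn R n (bin_val (tower_word xs)) (bin_val (tower_word ys))"
proof -
  have len: "length xs = Suc n" "length ys = Suc n" using assms by (auto simp: code_lists_def)
  then obtain i where i: "i < Suc n" "xs ! i \<noteq> ys ! i"
    using assms(3) nth_equalityI[of xs ys] by auto
  then have "xs ! i \<in> set xs" "ys ! i \<in> set ys" using len by simp_all
  then have "xs ! i < m" "ys ! i < m" using assms(1,2) unfolding code_lists_def by auto
  moreover have "(R ^^ i) (bin_val (tower_word zs))
                   = bin_val (lift_word (2 * (zs ! i) + 3) (tower_word (drop (Suc i) zs)))"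
    if "length zs = Suc n" for zs
    using funpow_R_tower_word[of i zs] Cons_nth_drop_Suc[of i zs, symmetric] i that by simp
  ultimately have "1 / 2 ^ (2*m+2)
      \<le> \<bar>(R ^^ i) (bin_val (tower_word xs)) - (R ^^ i) (bin_val (tower_word ys))\<bar>"
    using lift_word_dist_ge i(2) len by simp
  also have "\<dots> \<le> dn R n (bin_val (tower_word xs)) (bin_val (tower_word ys))"
    using i by (intro dn_ge) auto
  finally show ?thesis .
qed

lemma separated_R_tower_points:
  assumes "\<epsilon> \<le> 1 / 2 ^ (2*m+2)"
  shows "separated R n \<epsilon> ((\<lambda>xs. bin_val (tower_word xs)) ` code_lists m n)"
  unfolding separated_def
proof (intro conjI ballI impI subsetI)
  fix x assume "x \<in> (\<lambda>xs. bin_val (tower_word xs)) ` code_lists m n"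
  then obtain xs where "x = bin_val (tower_word xs)" by auto
  moreover have "bin_val (tower_word xs) \<le> 2 / 2 ^ 1"
    using admissible_tower_word[of xs] by (intro bin_val_le_if_zeros_below) (simp add: admissible_def)
  ultimately show "x \<in> {0..1}" using bin_val_nonneg by auto
next
  fix x y assume "x \<in> (\<lambda>xs. bin_val (tower_word xs)) ` code_lists m n"
    "y \<in> (\<lambda>xs. bin_val (tower_word xs)) ` code_lists m n" "x \<noteq> y"
  then obtain xs ys where "xs \<in> code_lists m n" "ys \<in> code_lists m n" "xs \<noteq> ys"
    and "x = bin_val (tower_word xs)" "y = bin_val (tower_word ys)" by auto
  then show "\<epsilon> \<le> dn R n x y" using dn_R_tower_words_ge[of xs m n ys] assms by simp
qed

lemma card_tower_points:
  "card ((\<lambda>xs. bin_val (tower_word xs)) ` code_lists m n) = m ^ Suc n"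
proof -
  have "inj_on (\<lambda>xs. bin_val (tower_word xs)) (code_lists m n)"
  proof (rule inj_onI, rule ccontr)
    fix xs ys assume "xs \<in> code_lists m n" "ys \<in> code_lists m n" "xs \<noteq> ys"
      and "bin_val (tower_word xs) = bin_val (tower_word ys)"
    then have "1 / 2 ^ (2*m+2) \<le> (0::real)"
      using dn_R_tower_words_ge[of xs m n ys] dn_same[of R n] by simp
    moreover have "0 < (1::real) / 2 ^ (2*m+2)" by simp
    ultimately show False by linarith
  qed
  moreover have "card (code_lists m n) = m ^ Suc n"
    unfolding code_lists_def by (subst card_lists_length_eq) auto
  ultimately show ?thesis by (simp add: card_image)
qed

theorem proposition6p11:
  shows "top_entropy R = \<infinity>"
proof (rule top_entropy_eq_PInfty)
  fix m :: nat
  assume "m \<ge> 1"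
  show "\<exists>\<delta>>0. \<forall>\<epsilon> n. 0 < \<epsilon> \<longrightarrow> \<epsilon> < \<delta> \<longrightarrow> n \<ge> 1 \<longrightarrow> ereal (real m ^ n) \<le> r_sep R n \<epsilon>"
  proof (intro exI[of _ "1 / 2 ^ (2*m+2)"] conjI allI impI)
    fix \<epsilon> :: real and n :: nat
    assume "\<epsilon> < 1 / 2 ^ (2*m+2)"
    have "ereal (real m ^ n) \<le> ereal (real m ^ Suc n)"
      using \<open>m \<ge> 1\<close> by (simp add: power_increasing)
    also have "\<dots> = ereal (card ((\<lambda>xs. bin_val (tower_word xs)) ` code_lists m n))"
      by (simp add: card_tower_points)
    also have "\<dots> \<le> r_sep R n \<epsilon>"
      using \<open>\<epsilon> < 1 / 2 ^ (2*m+2)\<close> finite_code_lists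
      by (intro card_le_r_sep separated_R_tower_points) auto
    finally show "ereal (real m ^ n) \<le> r_sep R n \<epsilon>" .
  qed simp
qed

end
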